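(* Let $t$ be a term containing no ascription subterm, $\Gamma$ a typing context and $S$ a type. If $\Gamma\vdash^Z t:S$ is derivable in Zdancewic's type system, then there exists a type $S'$ with $S'<:S$ such that $\Gamma\vdash t:S'$ is derivable in the syntax-directed type system.
   Context: Fix a security lattice $(\mathsf{Label},\preccurlyeq)$ with join $\sqcup$, meet $\sqcap$, least element $\bot$ and greatest element $\top$; $\ell$ ranges over labels. Types: $S ::= \mathsf{Bool}_\ell \mid S \to_\ell S$. Terms: $t ::= x \mid b_\ell \mid (\lambda x{:}S.t)_\ell \mid t\,t \mid t \oplus t \mid \mathsf{if}\ t\ \mathsf{then}\ t\ \mathsf{else}\ t \mid t :: S$, with $b\in\{\mathsf{true},\mathsf{false}\}$ and $\oplus\in\{\wedge,\vee,\Rightarrow\}$. A typing context $\Gamma$ is a finite partial map from variables to types. Label stamping: $\mathsf{Bool}_\ell \sqcup \ell' = \mathsf{Bool}_{\ell\sqcup\ell'}$ and $(S_1\to_\ell S_2)\sqcup\ell' = S_1 \to_{\ell\sqcup\ell'} S_2$. Subtyping $<:$ is the least relation with: $\mathsf{Bool}_\ell <: \mathsf{Bool}_{\ell'}$ if $\ell\preccurlyeq\ell'$; $S_1\to_\ell S_2 <: S_1'\to_{\ell'}S_2'$ if $S_1'<:S_1$, $S_2<:S_2'$, $\ell\preccurlyeq\ell'$. Subtype join $\curlyvee$ and meet $\curlywedge$ are the partial functions defined mutually by: $\mathsf{Bool}_\ell \curlyvee \mathsf{Bool}_{\ell'}=\mathsf{Bool}_{\ell\sqcup\ell'}$, $(S_{11}\to_\ell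 S_{12})\curlyvee(S_{21}\to_{\ell'}S_{22}) = (S_{11}\curlywedge S_{21})\to_{\ell\sqcup\ell'}(S_{12}\curlyvee S_{22})$; $\mathsf{Bool}_\ell \curlywedge \mathsf{Bool}_{\ell'}=\mathsf{Bool}_{\ell\sqcap\ell'}$, $(S_{11}\to_\ell S_{12})\curlywedge(S_{21}\to_{\ell'}S_{22}) = (S_{11}\curlyvee S_{21})\to_{\ell\sqcap\ell'}(S_{12}\curlywedge S_{22})$; undefined otherwise (including when a recursive component is undefined). The syntax-directed system $\Gamma\vdash t:S$ has rules: (Sx) $\Gamma\vdash x:S$ if $x{:}S\in\Gamma$; (Sb) $\Gamma\vdash b_\ell:\mathsf{Bool}_\ell$; (S$\lambda$) from $\Gamma,x{:}S_1\vdash t:S_2$ infer $\Gamma\vdash(\lambda x{:}S_1.t)_\ell : S_1\to_\ell S_2$; (S$\oplus$) from $\Gamma\vdash t_1:\mathsf{Bool}_{\ell_1}$, $\Gamma\vdash t_2:\mathsf{Bool}_{\ell_2}$ infer $\Gamma\vdash t_1\oplus t_2:\mathsf{Bool}_{\ell_1\sqcup\ell_2}$; (Sapp) from $\Gamma\vdash t_1:S_{11}\to_\ell S_{12}$, $\Gamma\vdash t_2:S_2$, $S_2<:S_{11}$ infer $\Gamma\vdash t_1\,t_2 : S_{12}\sqcup\ell$; (Sif) from $\Gamma\vdash t:\mathsf{Bool}_\ell$, $\Gamma\vdash t_1:S_1$, $\Gamma\vdash t_2:S_2$ infer $\Gamma\vdash \mathsf{if}\ t\ \mathsf{then}\ t_1\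 \mathsf{else}\ t_2 : (S_1\curlyvee S_2)\sqcup\ell$ (when defined); (S::) from $\Gamma\vdash t:S_1$, $S_1<:S_2$ infer $\Gamma\vdash t::S_2 : S_2$. Zdancewic's system $\Gamma\vdash^Z t:S$ (for ascription-free terms) has the same rules (Sx), (Sb), (S$\lambda$), (S$\oplus$) (with $\vdash^Z$), plus: (Zapp) from $\Gamma\vdash^Z t_1:S_{11}\to_\ell S_{12}$ and $\Gamma\vdash^Z t_2 : S_{11}$ infer $\Gamma\vdash^Z t_1\,t_2 : S_{12}\sqcup\ell$; (Zif) from $\Gamma\vdash^Z t:\mathsf{Bool}_\ell$, $\Gamma\vdash^Z t_1 : S\sqcup\ell$, $\Gamma\vdash^Z t_2:S\sqcup\ell$ infer $\Gamma\vdash^Z\mathsf{if}\ t\ \mathsf{then}\ t_1\ \mathsf{else}\ t_2 : S\sqcup\ell$; (Zsub) from $\Gamma\vdash^Z t:S$ and $S<:S'$ infer $\Gamma\vdash^Z t:S'$. *)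

theory Defs
  imports Main
begin

text \<open>Security labels: an arbitrary bounded lattice 'l
  (order = precedes, sup = join, inf = meet, bot, top).\<close>

datatype 'l ty = TBool 'l | TFun "'l ty" 'l "'l ty"

datatype bop = BAnd | BOr | BImp

datatype ('v, 'l) tm =
    Var 'v
  | BConst bool 'l
  | Lam 'v "'l ty" "('v, 'l) tm" 'l
  | App "('v, 'l) tm" "('v, 'l) tm"
  | BinOp bop "('v, 'l) tm" "('v, 'l) tm"
  | If "('v, 'l) tm" "('v, 'l) tm" "('v, 'l) tm"
  | Asc "('v, 'l) tm" "'l ty"

type_synonym ('v, 'l) ctx = "'v \<rightharpoonup> 'l ty"

fun stamp :: "'l::bounded_lattice ty \<Rightarrow> 'l \<Rightarrow> 'l ty" where
  "stamp (TBool l) l' = TBool (sup l l')"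
| "stamp (TFun S1 l S2) l' = TFun S1 (sup l l') S2"

inductive subty :: "'l::bounded_lattice ty \<Rightarrow> 'l ty \<Rightarrow> bool" where
  SubBool: "l \<le> l' \<Longrightarrow> subty (TBool l) (TBool l')"
| SubFun: "subty S1' S1 \<Longrightarrow> subty S2 S2' \<Longrightarrow> l \<le> l' \<Longrightarrow>
            subty (TFun S1 l S2) (TFun S1' l' S2')"

fun tjoin :: "'l::bounded_lattice ty \<Rightarrow> 'l ty \<Rightarrow> 'l ty option"
and tmeet :: "'l::bounded_lattice ty \<Rightarrow> 'l ty \<Rightarrow> 'l ty option" where
  "tjoin (TBool l) (TBool l') = Some (TBool (sup l l'))"
| "tjoin (TFun S11 l S12) (TFun S21 l' S22) =
     (case (tmeet S11 S21, tjoin S12 S22) of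
        (Some A, Some B) \<Rightarrow> Some (TFun A (sup l l') B)
      | _ \<Rightarrow> None)"
| "tjoin _ _ = None"
| "tmeet (TBool l) (TBool l') = Some (TBool (inf l l'))"
| "tmeet (TFun S11 l S12) (TFun S21 l' S22) =
     (case (tjoin S11 S21, tmeet S12 S22) of
        (Some A, Some B) \<Rightarrow> Some (TFun A (inf l l') B)
      | _ \<Rightarrow> None)"
| "tmeet _ _ = None"

fun asc_free :: "('v, 'l) tm \<Rightarrow> bool" where
  "asc_free (Var x) = True"
| "asc_free (BConst b l) = True"
| "asc_free (Lam x S t l) = asc_free t"
| "asc_free (App t1 t2) = (asc_free t1 \<and> asc_free t2)"
| "asc_free (BinOp op t1 t2) = (asc_free t1 \<and> asc_free t2)"
| "asc_free (If t t1 t2) = (asc_free t \<and> asc_free t1 \<and> asc_free t2)"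
| "asc_free (Asc t S) = False"

inductive styping :: "('v, 'l::bounded_lattice) ctx \<Rightarrow> ('v, 'l) tm \<Rightarrow> 'l ty \<Rightarrow> bool" where
  Sx: "\<Gamma> x = Some S \<Longrightarrow> styping \<Gamma> (Var x) S"
| Sb: "styping \<Gamma> (BConst b l) (TBool l)"
| Slam: "styping (\<Gamma>(x \<mapsto> S1)) t S2 \<Longrightarrow> styping \<Gamma> (Lam x S1 t l) (TFun S1 l S2)"
| Sop: "styping \<Gamma> t1 (TBool l1) \<Longrightarrow> styping \<Gamma> t2 (TBool l2) \<Longrightarrow>
        styping \<Gamma> (BinOp op t1 t2) (TBool (sup l1 l2))"
| Sapp: "styping \<Gamma> t1 (TFun S11 l S12) \<Longrightarrow> styping \<Gamma> t2 S2 \<Longrightarrow> subty S2 S11 \<Longrightarrow>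
         styping \<Gamma> (App t1 t2) (stamp S12 l)"
| Sif: "styping \<Gamma> t (TBool l) \<Longrightarrow> styping \<Gamma> t1 S1 \<Longrightarrow> styping \<Gamma> t2 S2 \<Longrightarrow>
        tjoin S1 S2 = Some S \<Longrightarrow> styping \<Gamma> (If t t1 t2) (stamp S l)"
| Sasc: "styping \<Gamma> t S1 \<Longrightarrow> subty S1 S2 \<Longrightarrow> styping \<Gamma> (Asc t S2) S2"

text \<open>Zdancewic's system (for ascription-free terms; no rule for ascription).\<close>
inductive ztyping :: "('v, 'l::bounded_lattice) ctx \<Rightarrow> ('v, 'l) tm \<Rightarrow> 'l ty \<Rightarrow> bool" where
  Zx: "\<Gamma> x = Some S \<Longrightarrow> ztyping \<Gamma> (Var x) S"
| Zb: "ztyping \<Gamma> (BConst b l) (TBool l)"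
| Zlam: "ztyping (\<Gamma>(x \<mapsto> S1)) t S2 \<Longrightarrow> ztyping \<Gamma> (Lam x S1 t l) (TFun S1 l S2)"
| Zop: "ztyping \<Gamma> t1 (TBool l1) \<Longrightarrow> ztyping \<Gamma> t2 (TBool l2) \<Longrightarrow>
        ztyping \<Gamma> (BinOp op t1 t2) (TBool (sup l1 l2))"
| Zapp: "ztyping \<Gamma> t1 (TFun S11 l S12) \<Longrightarrow> ztyping \<Gamma> t2 S11 \<Longrightarrow>
         ztyping \<Gamma> (App t1 t2) (stamp S12 l)"
| Zif: "ztyping \<Gamma> t (TBool l) \<Longrightarrow> ztyping \<Gamma> t1 (stamp S l) \<Longrightarrow> ztyping \<Gamma> t2 (stamp S l) \<Longrightarrow>
        ztyping \<Gamma> (If t t1 t2) (stamp S l)"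
| Zsub: "ztyping \<Gamma> t S \<Longrightarrow> subty S S' \<Longrightarrow> ztyping \<Gamma> t S'"

end

theory Submission
  imports Defs
begin

text \<open>The syntax-directed system computes a subtype of
  any type Zdancewic's system assigns: subsumption is absorbed by transitivity of subtyping, the
  argument of an application by the subsumption premise of the application rule, and the branches
  of a conditional by the fact that the subtype join of two types exists and lies below every
  common supertype. The last fact needs the dual statement for subtype meets, because function
  domains are contravariant.\<close>

lemma subty_TBool_right:
  "subty T (TBool l) \<longleftrightarrow> (\<exists>l'. T = TBool l' \<and> l' \<le> l)"
  by (auto elim: subty.cases intro: subty.intros)

lemma subty_TBool_left:
  "subty (TBool l) T \<longleftrightarrow> (\<exists>l'. T = TBool l' \<and> l \<le> l')"
  by (auto elim: subty.cases intro: subty.intros)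

lemma subty_TFun_right:
  "subty T (TFun A l B) \<longleftrightarrow>
     (\<exists>A' l' B'. T = TFun A' l' B' \<and> subty A A' \<and> subty B' B \<and> l' \<le> l)"
  by (auto elim: subty.cases intro: subty.intros)

lemma subty_TFun_left:
  "subty (TFun A l B) T \<longleftrightarrow>
     (\<exists>A' l' B'. T = TFun A' l' B' \<and> subty A' A \<and> subty B B' \<and> l \<le> l')"
  by (auto elim: subty.cases intro: subty.intros)

lemma subty_refl: "subty S S"
  by (induction S) (auto intro: subty.intros)

lemma subty_trans: "subty A B \<Longrightarrow> subty B C \<Longrightarrow> subty A C"
proof (induction B arbitrary: A C)
  case (TBool l)
  then show ?case
    by (auto simp: subty_TBool_left subty_TBool_right intro: subty.intros order_trans)
next
  case (TFun B1 l B2)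
  from TFun.prems obtain A1 l\<^sub>A A2 C1 l\<^sub>C C2
    where A: "A = TFun A1 l\<^sub>A A2" "subty B1 A1" "subty A2 B2" "l\<^sub>A \<le> l"
      and C: "C = TFun C1 l\<^sub>C C2" "subty C1 B1" "subty B2 C2" "l \<le> l\<^sub>C"
    by (auto simp: subty_TFun_left subty_TFun_right)
  have "subty C1 A1" using TFun.IH(1) A C by blast
  moreover have "subty A2 C2" using TFun.IH(2) A C by blast
  ultimately show ?case
    using A C by (auto intro: subty.intros order_trans)
qed

lemma subty_stamp_mono: "subty S S' \<Longrightarrow> l \<le> l' \<Longrightarrow> subty (stamp S l) (stamp S' l')"
  by (erule subty.cases) (auto intro!: subty.intros intro: sup_mono)

lemma stamp_stamp: "stamp (stamp S l) l' = stamp S (sup l l')"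
  by (cases S) (auto simp: sup_assoc)

lemma tjoin_tmeet_bounded:
  "(\<forall>S1 S2. subty S1 U \<longrightarrow> subty S2 U \<longrightarrow> (\<exists>J. tjoin S1 S2 = Some J \<and> subty J U)) \<and>
   (\<forall>S1 S2. subty U S1 \<longrightarrow> subty U S2 \<longrightarrow> (\<exists>M. tmeet S1 S2 = Some M \<and> subty U M))"
proof (induction U)
  case (TBool l)
  show ?case
    by (auto simp: subty_TBool_left subty_TBool_right intro: subty.intros)
next
  case (TFun A l B)
  show ?case
  proof (intro allI conjI impI)
    fix S1 S2 assume "subty S1 (TFun A l B)" "subty S2 (TFun A l B)"
    then obtain A1 l1 B1 A2 l2 B2
      where "S1 = TFun A1 l1 B1" "S2 = TFun A2 l2 B2"
        and "subty A A1" "subty A A2" "subty B1 B" "subty B2 B" "l1 \<le> l" "l2 \<le> l"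
      by (auto simp: subty_TFun_right)
    moreover obtain M where "tmeet A1 A2 = Some M" "subty A M"
      using TFun.IH(1) \<open>subty A A1\<close> \<open>subty A A2\<close> by blast
    moreover obtain J where "tjoin B1 B2 = Some J" "subty J B"
      using TFun.IH(2) \<open>subty B1 B\<close> \<open>subty B2 B\<close> by blast
    ultimately show "\<exists>J. tjoin S1 S2 = Some J \<and> subty J (TFun A l B)"
      by (auto intro!: subty.intros)
  next
    fix S1 S2 assume "subty (TFun A l B) S1" "subty (TFun A l B) S2"
    then obtain A1 l1 B1 A2 l2 B2
      where "S1 = TFun A1 l1 B1" "S2 = TFun A2 l2 B2"
        and "subty A1 A" "subty A2 A" "subty B B1" "subty B B2" "l \<le> l1" "l \<le> l2"
      by (auto simp: subty_TFun_left)
    moreover obtain J where "tjoin A1 A2 = Some J" "subty J A"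
      using TFun.IH(1) \<open>subty A1 A\<close> \<open>subty A2 A\<close> by blast
    moreover obtain M where "tmeet B1 B2 = Some M" "subty B M"
      using TFun.IH(2) \<open>subty B B1\<close> \<open>subty B B2\<close> by blast
    ultimately show "\<exists>M. tmeet S1 S2 = Some M \<and> subty (TFun A l B) M"
      by (auto intro!: subty.intros)
  qed
qed

lemma tjoin_below_upper_bound:
  assumes "subty S1 U" and "subty S2 U"
  obtains J where "tjoin S1 S2 = Some J" and "subty J U"
  using tjoin_tmeet_bounded assms by blast

lemma ztyping_imp_styping_subty:
  "ztyping \<Gamma> t S \<Longrightarrow> asc_free t \<Longrightarrow> \<exists>S'. subty S' S \<and> styping \<Gamma> t S'"
proof (induction rule: ztyping.induct)
  case (Zx \<Gamma> x S)
  then show ?case by (auto intro: styping.intros subty_refl)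
next
  case (Zb \<Gamma> b l)
  then show ?case by (auto intro: styping.intros subty_refl)
next
  case (Zlam \<Gamma> x S1 t S2 l)
  then obtain S2' where "subty S2' S2" "styping (\<Gamma>(x \<mapsto> S1)) t S2'" by fastforce
  then show ?case by (meson styping.Slam subty.SubFun subty_refl order_refl)
next
  case (Zop \<Gamma> t1 l1 t2 l2 op)
  then obtain l1' l2' where "l1' \<le> l1" "styping \<Gamma> t1 (TBool l1')"
    and "l2' \<le> l2" "styping \<Gamma> t2 (TBool l2')"
    by (auto simp: subty_TBool_right)
  then show ?case by (auto intro: styping.Sop subty.SubBool sup_mono)
next
  case (Zapp \<Gamma> t1 S11 l S12 t2)
  then obtain S11' l' S12' S2 where "styping \<Gamma> t1 (TFun S11' l' S12')"
    and "subty S11 S11'" "subty S12' S12" "l' \<le> l"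
    and "styping \<Gamma> t2 S2" "subty S2 S11"
    by (auto simp: subty_TFun_right)
  moreover from this have "subty S2 S11'" using subty_trans by blast
  ultimately show ?case by (meson styping.Sapp subty_stamp_mono)
next
  case (Zif \<Gamma> t l t1 S t2)
  then obtain l' S1 S2 where "l' \<le> l" "styping \<Gamma> t (TBool l')"
    and "subty S1 (stamp S l)" "styping \<Gamma> t1 S1"
    and "subty S2 (stamp S l)" "styping \<Gamma> t2 S2"
    by (auto simp: subty_TBool_right)
  moreover obtain J where "tjoin S1 S2 = Some J" "subty J (stamp S l)"
    using tjoin_below_upper_bound \<open>subty S1 _\<close> \<open>subty S2 _\<close> by blast
  moreover have "subty (stamp J l') (stamp S l)"
    using subty_stamp_mono[OF \<open>subty J _\<close> \<open>l' \<le> l\<close>] by (simp add: stamp_stamp)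
  ultimately show ?case by (blast intro: styping.Sif)
next
  case (Zsub \<Gamma> t S S')
  then show ?case using subty_trans by blast
qed

theorem proposition2:
  fixes \<Gamma> :: "('v, 'l::bounded_lattice) ctx" and t :: "('v, 'l) tm" and S :: "'l ty"
  assumes "asc_free t"
    and "ztyping \<Gamma> t S"
  shows "\<exists>S'. subty S' S \<and> styping \<Gamma> t S'"
  using ztyping_imp_styping_subty assms by blast

end
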